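(* Let $P$ be a poset which admits a strictly isotone map $g:P\to P\uparrow x=\{y\in P\mid y\ge x\}$ for some non-minimal element $x\in P$. Then there exists no strictly isotone map $f:\mathrm{id}(P)\to P$. In particular, if $P$ is the lattice of all subsets of an infinite set, or the lattice of all equivalence relations on an infinite set, there is no strictly isotone map $\mathrm{id}(P)\to P$.
   Context: For a poset $P$, an ideal of $P$ is an upward directed downset of $P$ (a downset $d$ satisfies $x\le y\in d\Rightarrow x\in d$; upward directed means every two elements of the set have a common upper bound in the set). $\mathrm{id}(P)$ denotes the set of nonempty ideals of $P$, ordered by inclusion. A map $f:P\to Q$ of posets is strictly isotone if $x<y$ implies $f(x)<f(y)$. *)

theory Defs
  imports Main
begin

text \<open>A poset is represented as a carrier set P of a type with a partial order.\<close>

definition downset_in :: "'a::order set \<Rightarrow> 'a set \<Rightarrow> bool" where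
  "downset_in P d \<longleftrightarrow> d \<subseteq> P \<and> (\<forall>x\<in>P. \<forall>y\<in>d. x \<le> y \<longrightarrow> x \<in> d)"

definition up_directed :: "'a::order set \<Rightarrow> bool" where
  "up_directed d \<longleftrightarrow> (\<forall>x\<in>d. \<forall>y\<in>d. \<exists>z\<in>d. x \<le> z \<and> y \<le> z)"

definition is_ideal :: "'a::order set \<Rightarrow> 'a set \<Rightarrow> bool" where
  "is_ideal P d \<longleftrightarrow> downset_in P d \<and> up_directed d"

text \<open>id(P): the set of nonempty ideals of P, ordered by inclusion (the order on sets).\<close>
definition ideals :: "'a::order set \<Rightarrow> 'a set set" where
  "ideals P = {d. d \<noteq> {} \<and> is_ideal P d}"

definition strictly_isotone :: "'a::order set \<Rightarrow> 'b::order set \<Rightarrow> ('a \<Rightarrow> 'b) \<Rightarrow> bool" where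
  "strictly_isotone A B f \<longleftrightarrow> (\<forall>x\<in>A. f x \<in> B) \<and> strict_mono_on A f"

definition up_set :: "'a::order set \<Rightarrow> 'a \<Rightarrow> 'a set" where
  "up_set P x = {y\<in>P. y \<ge> x}"

end

theory Submission
  imports Defs "HOL-Library.Equipollence"
begin

text \<open>
  Suppose \<open>h\<close> maps the nonempty ideals of \<open>P\<close> strictly isotonically into \<open>{z \<in> P. y < z}\<close>.
  Starting from \<open>y\<close>, transfinitely iterate ``apply \<open>h\<close> to the down-closure of what has been
  built so far''. Strict isotony makes each new value exceed all previous ones, so this yields
  a strictly increasing chain that can be continued forever; Zorn's lemma applied to its
  initial segments gives the contradiction. If \<open>g : P \<rightarrow> P\<up>x\<close> is strictly isotone and
  \<open>y < x\<close>, then \<open>g \<circ> f\<close> is such an \<open>h\<close> for every strictly isotone \<open>f : id(P) \<rightarrow> P\<close>.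
  For subsets, resp. equivalence relations, of an infinite set \<open>A\<close>, a suitable \<open>g\<close> is obtained
  by transporting along an injection of \<open>A\<close> into itself that misses a point \<open>a\<close>, resp. two points
  \<open>a \<noteq> b\<close>, and then adding \<open>a\<close>, resp. identifying \<open>a\<close> with \<open>b\<close>.
\<close>

definition down_closure :: "'a::order set \<Rightarrow> 'a set \<Rightarrow> 'a set" where
  "down_closure P C = {p\<in>P. \<exists>c\<in>C. p \<le> c}"

lemma down_closure_in_ideals:
  assumes "C \<subseteq> P" "C \<noteq> {}" "Complete_Partial_Order.chain (\<le>) C"
  shows "down_closure P C \<in> ideals P"
proof -
  have "up_directed (down_closure P C)"
    unfolding up_directed_def
  proof (intro ballI)
    fix p q assume "p \<in> down_closure P C" "q \<in> down_closure P C"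
    then obtain c d where "c \<in> C" "d \<in> C" "p \<le> c" "q \<le> d"
      unfolding down_closure_def by blast
    moreover obtain z where "z \<in> C" "c \<le> z" "d \<le> z"
      using assms(3) \<open>c \<in> C\<close> \<open>d \<in> C\<close> unfolding chain_def by blast
    ultimately show "\<exists>z\<in>down_closure P C. p \<le> z \<and> q \<le> z"
      using assms(1) unfolding down_closure_def by (blast intro: order.trans)
  qed
  moreover have "downset_in P (down_closure P C)"
    unfolding downset_in_def down_closure_def using order_trans by blast
  moreover have "down_closure P C \<noteq> {}"
    using assms(1,2) unfolding down_closure_def by blast
  ultimately show ?thesis
    unfolding ideals_def is_ideal_def by blast
qed

lemma down_closure_strict_mono:
  assumes "c \<in> C" "c \<in> P"
  shows "down_closure P {z\<in>C. z < c} \<subset> down_closure P C"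
  using assms unfolding down_closure_def by (auto simp: less_le_not_le)

text \<open>
  They play the role of the transfinite sequence
  \<open>c\<^sub>\<alpha> = h(\<down>{c\<^sub>\<beta> | \<beta> < \<alpha>})\<close>, without introducing ordinals.
\<close>
definition recursive_chain :: "'a::order set \<Rightarrow> ('a set \<Rightarrow> 'a) \<Rightarrow> 'a \<Rightarrow> 'a set \<Rightarrow> bool" where
  "recursive_chain P h y C \<longleftrightarrow> C \<subseteq> P \<and> y \<in> C \<and> Complete_Partial_Order.chain (\<le>) C
     \<and> (\<forall>c\<in>C. y \<le> c) \<and> (\<forall>c\<in>C - {y}. c = h (down_closure P {z\<in>C. z < c}))"

definition initial_segment :: "'a::order set \<Rightarrow> 'a set \<Rightarrow> bool" where
  "initial_segment C D \<longleftrightarrow> C \<subseteq> D \<and> (\<forall>d\<in>D - C. \<forall>c\<in>C. c < d)"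

lemma recursive_chain_down_closure_in_ideals:
  "recursive_chain P h y C \<Longrightarrow> down_closure P C \<in> ideals P"
  unfolding recursive_chain_def by (intro down_closure_in_ideals) auto

lemma recursive_chain_less_next:
  assumes C: "recursive_chain P h y C" and "c \<in> C"
    and h: "strict_mono_on (ideals P) h" and y_less: "y < h (down_closure P C)"
  shows "c < h (down_closure P C)"
proof (cases "c = y")
  case True
  with y_less show ?thesis by simp
next
  case False
  let ?S = "{z\<in>C. z < c}"
  have "y < c"
    using C \<open>c \<in> C\<close> False unfolding recursive_chain_def by (auto simp: order.order_iff_strict)
  have "down_closure P ?S \<in> ideals P"
    using C \<open>y < c\<close> unfolding recursive_chain_def
    by (intro down_closure_in_ideals) (auto intro: chain_subset)
  moreover have "down_closure P ?S \<subset> down_closure P C"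
    using C \<open>c \<in> C\<close> unfolding recursive_chain_def by (intro down_closure_strict_mono) auto
  ultimately have "h (down_closure P ?S) < h (down_closure P C)"
    using h recursive_chain_down_closure_in_ideals[OF C] by (meson strict_mono_onD)
  moreover have "c = h (down_closure P ?S)"
    using C \<open>c \<in> C\<close> False unfolding recursive_chain_def by auto
  ultimately show ?thesis by simp
qed

lemma recursive_chain_insert_next:
  assumes C: "recursive_chain P h y C" and h: "strict_mono_on (ideals P) h"
    and next_in: "h (down_closure P C) \<in> P" and y_less: "y < h (down_closure P C)"
  shows "recursive_chain P h y (insert (h (down_closure P C)) C)"
proof -
  let ?q = "h (down_closure P C)"
  have less: "\<forall>c\<in>C. c < ?q"
    using recursive_chain_less_next[OF C _ h y_less] by blast
  have "{z\<in>insert ?q C. z < ?q} = C"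
    using less by auto
  moreover have "{z\<in>insert ?q C. z < c} = {z\<in>C. z < c}" if "c \<in> C" for c
    using less that by auto
  ultimately show ?thesis
    using C next_in y_less less unfolding recursive_chain_def chain_def by (auto simp: less_imp_le)
qed

lemma initial_segment_partial_order:
  "partial_order_on X (relation_of initial_segment X)"
  unfolding partial_order_on_def preorder_on_def refl_on_def trans_on_def antisym_on_def
    relation_of_def initial_segment_def
  by (auto, blast+)

lemma initial_segment_below:
  "initial_segment C D \<Longrightarrow> c \<in> C \<Longrightarrow> {z\<in>D. z < c} = {z\<in>C. z < c}"
  unfolding initial_segment_def by (auto dest: less_asym)

lemma initial_segment_Union:
  assumes "\<forall>C\<in>\<C>. \<forall>D\<in>\<C>. initial_segment C D \<or> initial_segment D C" "C \<in> \<C>"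
  shows "initial_segment C (\<Union>\<C>)"
  using assms unfolding initial_segment_def by blast

lemma recursive_chain_Union:
  assumes "\<C> \<noteq> {}" and chains: "\<forall>C\<in>\<C>. recursive_chain P h y C"
    and cmp: "\<forall>C\<in>\<C>. \<forall>D\<in>\<C>. initial_segment C D \<or> initial_segment D C"
  shows "recursive_chain P h y (\<Union>\<C>)"
  unfolding recursive_chain_def chain_def
proof (intro conjI ballI)
  show "\<Union>\<C> \<subseteq> P" "y \<in> \<Union>\<C>"
    using assms(1) chains unfolding recursive_chain_def by blast+
  show "y \<le> c" if "c \<in> \<Union>\<C>" for c
    using that chains unfolding recursive_chain_def by blast
  show "a \<le> b \<or> b \<le> a" if ab: "a \<in> \<Union>\<C>" "b \<in> \<Union>\<C>" for a b
  proof -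
    obtain C D where "C \<in> \<C>" "D \<in> \<C>" "a \<in> C" "b \<in> D"
      using ab by blast
    then obtain E where "E \<in> \<C>" "a \<in> E" "b \<in> E"
      using cmp unfolding initial_segment_def by blast
    then show ?thesis
      using chains unfolding recursive_chain_def chain_def by blast
  qed
  show "c = h (down_closure P {z\<in>\<Union>\<C>. z < c})" if c: "c \<in> \<Union>\<C> - {y}" for c
  proof -
    obtain C where "C \<in> \<C>" "c \<in> C" "c \<noteq> y"
      using c by blast
    then show ?thesis
      using chains initial_segment_below[OF initial_segment_Union[OF cmp]]
      unfolding recursive_chain_def by auto
  qed
qed

lemma exists_maximal_recursive_chain:
  assumes "y \<in> P"
  shows "\<exists>M. recursive_chain P h y M \<and>
    (\<forall>D. recursive_chain P h y D \<and> initial_segment M D \<longrightarrow> D = M)"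
proof -
  let ?R = "{C. recursive_chain P h y C}"
  have "\<exists>M\<in>?R. \<forall>D\<in>?R. initial_segment M D \<longrightarrow> D = M"
  proof (rule predicate_Zorn[OF initial_segment_partial_order])
    fix \<C> assume "\<C> \<in> Chains (relation_of initial_segment ?R)"
    then have chains: "\<forall>C\<in>\<C>. recursive_chain P h y C"
      and cmp: "\<forall>C\<in>\<C>. \<forall>D\<in>\<C>. initial_segment C D \<or> initial_segment D C"
      unfolding Chains_def relation_of_def by auto
    show "\<exists>U\<in>?R. \<forall>C\<in>\<C>. initial_segment C U"
    proof (cases "\<C> = {}")
      case True
      have "recursive_chain P h y {y}"
        using assms unfolding recursive_chain_def chain_def by auto
      with True show ?thesis by blast
    next
      case False
      with chains cmp show ?thesis
        using recursive_chain_Union initial_segment_Union by blast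
    qed
  qed
  then show ?thesis by blast
qed

theorem no_strictly_isotone_ideals_to_strict_up_set:
  assumes "y \<in> P"
  shows "\<not> strictly_isotone (ideals P) {z\<in>P. y < z} h"
proof
  assume "strictly_isotone (ideals P) {z\<in>P. y < z} h"
  then have h: "strict_mono_on (ideals P) h" and h_above: "\<forall>d\<in>ideals P. h d \<in> P \<and> y < h d"
    unfolding strictly_isotone_def by auto
  obtain M where M: "recursive_chain P h y M"
    and maximal: "\<forall>D. recursive_chain P h y D \<and> initial_segment M D \<longrightarrow> D = M"
    using exists_maximal_recursive_chain[OF assms] by blast
  let ?q = "h (down_closure P M)"
  have q: "?q \<in> P" "y < ?q"
    using h_above recursive_chain_down_closure_in_ideals[OF M] by auto
  then have "\<forall>c\<in>M. c < ?q"
    using recursive_chain_less_next[OF M _ h] by blast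
  then have "initial_segment M (insert ?q M)" "?q \<notin> M"
    unfolding initial_segment_def by auto
  then show False
    using maximal recursive_chain_insert_next[OF M h q] by blast
qed

lemma strictly_isotone_comp:
  "strictly_isotone A B f \<Longrightarrow> strictly_isotone B C g \<Longrightarrow> strictly_isotone A C (g \<circ> f)"
  unfolding strictly_isotone_def by (auto intro!: strict_mono_onI dest: strict_mono_onD)

theorem no_strictly_isotone_ideals_if_lift_above_non_minimal:
  assumes "x \<in> P" "y \<in> P" "y < x" and g: "strictly_isotone P (up_set P x) g"
  shows "\<not> strictly_isotone (ideals P) P f"
proof
  assume "strictly_isotone (ideals P) P f"
  from this g have "strictly_isotone (ideals P) (up_set P x) (g \<circ> f)"
    by (rule strictly_isotone_comp)
  with \<open>y < x\<close> have "strictly_isotone (ideals P) {z\<in>P. y < z} (g \<circ> f)"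
    unfolding strictly_isotone_def up_set_def by (auto intro: less_le_trans)
  with \<open>y \<in> P\<close> show False
    using no_strictly_isotone_ideals_to_strict_up_set by blast
qed

corollary no_strictly_isotone_ideals_if_bottom_moves:
  assumes "m \<in> P" "\<forall>p\<in>P. m \<le> p" and g: "strictly_isotone P P g" and "g m \<noteq> m"
  shows "\<not> strictly_isotone (ideals P) P f"
proof (rule no_strictly_isotone_ideals_if_lift_above_non_minimal[where x = "g m" and y = m])
  show "m \<in> P" by fact
  show "g m \<in> P"
    using g assms(1) unfolding strictly_isotone_def by blast
  then show "m < g m"
    using assms(2,4) by (auto simp: order.order_iff_strict)
  show "strictly_isotone P (up_set P (g m)) g"
    using g assms(1,2) unfolding strictly_isotone_def up_set_def by (auto intro: strict_mono_on_leD)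
qed

lemma infinite_lepoll_Diff_finite:
  assumes "infinite A" "finite F"
  shows "A \<lesssim> A - F"
  using \<open>finite F\<close>
proof (induction F rule: finite_induct)
  case empty
  show ?case by (simp add: subset_imp_lepoll)
next
  case (insert a F)
  have "A - F \<subseteq> insert a (A - insert a F)"
    by blast
  moreover have "infinite (A - insert a F)"
    using assms(1) insert.hyps(1) by simp
  ultimately have "A - F \<lesssim> A - insert a F"
    by (meson infinite_insert_lepoll lepoll_trans subset_imp_lepoll)
  with insert.IH show ?case
    by (rule lepoll_trans)
qed

lemma strictly_isotone_insert_image:
  assumes "inj_on e A" "e ` A \<subseteq> A" "a \<in> A - e ` A"
  shows "strictly_isotone (Pow A) (Pow A) (\<lambda>S. insert a (e ` S))"
  unfolding strictly_isotone_def
proof (intro conjI ballI strict_mono_onI)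
  show "insert a (e ` S) \<in> Pow A" if "S \<in> Pow A" for S
    using that assms(2,3) by auto
  show "insert a (e ` S) < insert a (e ` T)" if "S \<in> Pow A" "T \<in> Pow A" "S < T" for S T
  proof -
    have "e ` S \<subset> e ` T"
      using that inj_on_subset[OF assms(1)] by (intro image_strict_mono) auto
    moreover have "a \<notin> e ` T"
      using that assms(3) by blast
    ultimately show ?thesis
      by auto
  qed
qed

theorem no_strictly_isotone_ideals_Pow:
  assumes "infinite A"
  shows "\<not> strictly_isotone (ideals (Pow A)) (Pow A) f"
proof -
  obtain a where "a \<in> A"
    using assms infinite_imp_nonempty by blast
  moreover obtain e where e: "inj_on e A" "e ` A \<subseteq> A - {a}"
    using infinite_lepoll_Diff_finite[OF assms, of "{a}"] unfolding lepoll_def by blast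
  ultimately have "strictly_isotone (Pow A) (Pow A) (\<lambda>S. insert a (e ` S))"
    by (intro strictly_isotone_insert_image) auto
  then show ?thesis
    by (intro no_strictly_isotone_ideals_if_bottom_moves[where m = "{}"]) auto
qed

lemma equiv_map_prod_image:
  assumes "inj_on e A" "equiv A r"
  shows "equiv (e ` A) (map_prod e e ` r)"
proof (rule equivI)
  have r: "r \<subseteq> A \<times> A" "refl_on A r" "sym r" "trans r"
    using assms(2) unfolding equiv_def by auto
  show "map_prod e e ` r \<subseteq> e ` A \<times> e ` A"
    using r(1) by auto
  show "refl_on (e ` A) (map_prod e e ` r)"
    using r(2) unfolding refl_on_def by auto
  show "sym (map_prod e e ` r)"
    using r(3) unfolding sym_def by auto
  show "trans (map_prod e e ` r)"
  proof (rule transI)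
    fix u v w assume "(u, v) \<in> map_prod e e ` r" "(v, w) \<in> map_prod e e ` r"
    then obtain u' v' v'' w' where "(u', v') \<in> r" "(v'', w') \<in> r"
      and eq: "u = e u'" "v = e v'" "v = e v''" "w = e w'"
      by auto
    moreover have "v' = v''"
      using assms(1) r(1) eq calculation(1,2) unfolding inj_on_def by blast
    ultimately have "(u', w') \<in> r"
      using r(4) by (blast dest: transD)
    with eq show "(u, w) \<in> map_prod e e ` r"
      by auto
  qed
qed

lemma equiv_Un_disjoint:
  assumes r: "equiv A r" and s: "equiv B s" and disjoint: "A \<inter> B = {}"
  shows "equiv (A \<union> B) (r \<union> s)"
proof (rule equivI)
  have rs: "r \<subseteq> A \<times> A" "s \<subseteq> B \<times> B" "trans r" "trans s"
    using r s unfolding equiv_def by auto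
  then show "r \<union> s \<subseteq> (A \<union> B) \<times> (A \<union> B)"
    by blast
  show "refl_on (A \<union> B) (r \<union> s)"
    using r s unfolding equiv_def by (blast intro: refl_on_Un)
  show "sym (r \<union> s)"
    using r s unfolding equiv_def by (blast intro: sym_Un)
  show "trans (r \<union> s)"
  proof (rule transI)
    fix u v w assume "(u, v) \<in> r \<union> s" "(v, w) \<in> r \<union> s"
    then consider "(u, v) \<in> r" "(v, w) \<in> r" | "(u, v) \<in> s" "(v, w) \<in> s"
      using rs(1,2) disjoint by blast
    then show "(u, w) \<in> r \<union> s"
      using rs(3,4) by cases (blast dest: transD)+
  qed
qed

lemma strictly_isotone_map_prod_image_Un:
  assumes e: "inj_on e A" "e ` A \<subseteq> A" and s: "equiv (A - e ` A) s"
  shows "strictly_isotone {r. equiv A r} {r. equiv A r} (\<lambda>r. map_prod e e ` r \<union> s)"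
  unfolding strictly_isotone_def
proof (intro conjI ballI strict_mono_onI)
  have disjoint: "map_prod e e ` r \<inter> s = {}" if "r \<subseteq> A \<times> A" for r
    using that equiv_type[OF s] by auto
  show "map_prod e e ` r \<union> s \<in> {r. equiv A r}" if "r \<in> {r. equiv A r}" for r
  proof -
    have "equiv (e ` A \<union> (A - e ` A)) (map_prod e e ` r \<union> s)"
      using that e(1) s by (intro equiv_Un_disjoint equiv_map_prod_image) auto
    moreover have "e ` A \<union> (A - e ` A) = A"
      using e(2) by blast
    ultimately show ?thesis by simp
  qed
  show "map_prod e e ` r \<union> s < map_prod e e ` r' \<union> s"
    if "r \<in> {r. equiv A r}" "r' \<in> {r. equiv A r}" "r < r'" for r r'
  proof -
    have "r' \<subseteq> A \<times> A"
      using that(2) equiv_type by blast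
    then have "inj_on (map_prod e e) r'"
      using map_prod_inj_on[OF e(1) e(1)] by (rule inj_on_subset[rotated])
    then have "map_prod e e ` r \<subset> map_prod e e ` r'"
      using that(3) by (intro image_strict_mono) auto
    with disjoint[OF \<open>r' \<subseteq> A \<times> A\<close>] show ?thesis
      by blast
  qed
qed

theorem no_strictly_isotone_ideals_equiv:
  assumes "infinite A"
  shows "\<not> strictly_isotone (ideals {r. equiv A r}) {r. equiv A r} f"
proof -
  obtain a where "a \<in> A"
    using assms infinite_imp_nonempty by blast
  moreover obtain b where "b \<in> A - {a}"
    using infinite_imp_nonempty[OF infinite_remove[OF assms, of a]] by blast
  moreover obtain e where e: "inj_on e A" "e ` A \<subseteq> A - {a, b}"
    using infinite_lepoll_Diff_finite[OF assms, of "{a, b}"] unfolding lepoll_def by blast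
  ultimately have ab: "a \<in> A - e ` A" "b \<in> A - e ` A" "a \<noteq> b"
    by auto
  define s where "s = Id_on (A - e ` A) \<union> {(a, b), (b, a)}"
  have "equiv (A - e ` A) s"
    using ab unfolding s_def by (intro equivI) (auto simp: refl_on_def sym_def trans_def)
  with e have "strictly_isotone {r. equiv A r} {r. equiv A r} (\<lambda>r. map_prod e e ` r \<union> s)"
    by (intro strictly_isotone_map_prod_image_Un) auto
  moreover have "equiv A (Id_on A)" "\<forall>r\<in>{r. equiv A r}. Id_on A \<le> r"
    unfolding equiv_def refl_on_def sym_def trans_def by auto
  moreover have "map_prod e e ` Id_on A \<union> s \<noteq> Id_on A"
    using ab(3) unfolding s_def by auto
  ultimately show ?thesis
    by (intro no_strictly_isotone_ideals_if_bottom_moves[where m = "Id_on A"]) auto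
qed

theorem corollary2p3:
  shows "(\<forall>(P::'a::order set) x g. x \<in> P \<and> (\<exists>y\<in>P. y < x) \<and> strictly_isotone P (up_set P x) g
            \<longrightarrow> \<not> (\<exists>f. strictly_isotone (ideals P) P f))
       \<and> (\<forall>A::'b set. infinite A \<longrightarrow> \<not> (\<exists>f. strictly_isotone (ideals (Pow A)) (Pow A) f))
       \<and> (\<forall>A::'c set. infinite A \<longrightarrow>
            \<not> (\<exists>f. strictly_isotone (ideals {r. equiv A r}) {r. equiv A r} f))"
proof (intro conjI allI impI)
  show "\<not> (\<exists>f. strictly_isotone (ideals P) P f)"
    if "x \<in> P \<and> (\<exists>y\<in>P. y < x) \<and> strictly_isotone P (up_set P x) g" for P :: "'a set" and x g
    using that no_strictly_isotone_ideals_if_lift_above_non_minimal by blast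
qed (use no_strictly_isotone_ideals_Pow no_strictly_isotone_ideals_equiv in blast)+

end
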